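(* Let $p^{(3)}(n)$ be defined by $\sum_{n\ge0}p^{(3)}(n)q^n=\prod_{j\ge1}(1-q^j)^{-3}$ (the number of three-colored partitions of $n$). Then for every $n\ge0$, $$p^{(3)}(n)=\sum_{\substack{c\in\mathcal C_{P_3}\\ |c|=n}}\ \prod_{j\ge1}\big((-1)^{j+1}(2j+1)\big)^{m_{j(j+1)/2}(c)}=\sum_{\substack{c\in\mathcal C_{P_3}\\ |c|=n}}(-1)^{\ell^+(c)}\prod_{j\ge1}(2j+1)^{m_{j(j+1)/2}(c)},$$ where $P_3=\{j(j+1)/2:j\in\mathbb N\}$.
   Context: A composition is an ordered finite sequence of positive integers (including the empty one); $|c|$ is the sum of parts; $m_i(c)$ is the number of parts of $c$ equal to $i$; $\mathcal C_T$ is the set of compositions with all parts in $T$. $\ell^+(c)$ is the number of parts of $c$ lying in $\{m(2m+1): m\in\mathbb N\}$ (the triangular numbers $j(j+1)/2$ with $j$ even). *)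

theory Defs
  imports "HOL-Computational_Algebra.Formal_Power_Series"
begin

text \<open>Three-coloured partition numbers: the n-th coefficient of
  prod_{j>=1} (1-q^j)^(-3). Only the factors with j <= n affect the
  coefficient of q^n, so the product is truncated at j = n.\<close>
definition p3 :: "nat \<Rightarrow> rat" where
  "p3 n = fps_nth ((inverse (\<Prod>j\<in>{1..n}. (1 - fps_X ^ j :: rat fps))) ^ 3) n"

definition compositions :: "nat set \<Rightarrow> nat \<Rightarrow> nat list set" where
  "compositions T n = {c. (\<forall>x\<in>set c. 0 < x \<and> x \<in> T) \<and> sum_list c = n}"

definition P3 :: "nat set" where
  "P3 = {j * (j + 1) div 2 | j. True}"

definition mult :: "nat \<Rightarrow> nat list \<Rightarrow> nat" where
  "mult i c = count_list c i"

definition ellplus :: "nat list \<Rightarrow> nat" where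
  "ellplus c = length (filter (\<lambda>x. x \<in> {m * (2 * m + 1) | m. True}) c)"

end

theory Submission
  imports Defs "HOL-Computational_Algebra.Polynomial"
begin

text \<open>By Jacobi's identity \<open>(q;q)_\<infinity>^3 = \<Sum>j. (-1)^j (2j+1) q^(j(j+1)/2)\<close>, the generating
  function of \<open>p3\<close> is \<open>1/(1 - g)\<close> with \<open>g = \<Sum>j\<ge>1. (-1)^(j+1) (2j+1) q^(j(j+1)/2)\<close>, and
  expanding \<open>1/(1 - g) = \<Sum>k. g^k\<close> gives the sum over compositions into triangular parts.
  Jacobi's identity is only needed modulo \<open>q^(n+1)\<close>, where it follows from the finite triple
  product \<open>\<Prod>j=1..n. (1 - q^(j-1) z)(z - q^j)\<close>: its coefficient of \<open>z^i\<close> is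
  \<open>(-1)^(i+n) q^((i-n)(i-n-1)/2)\<close> times the Gaussian binomial \<open>[2n, i]_q\<close>, its derivative at
  \<open>z = 1\<close> is \<open>-(q;q)_(n-1) (q;q)_n\<close>, and after multiplying by \<open>(q;q)_(n-1)\<close> each Gaussian
  binomial may be replaced by 1 up to the order that matters.\<close>

unbundle fps_syntax

section \<open>Truncated power series\<close>

lemma fps_cutoff_mult_cong:
  fixes f g f' g' :: "'a::comm_semiring_1 fps"
  assumes "fps_cutoff n f = fps_cutoff n f'" and "fps_cutoff n g = fps_cutoff n g'"
  shows "fps_cutoff n (f * g) = fps_cutoff n (f' * g')"
  using assms unfolding fps_cutoff_eq_fps_cutoff_iff by (auto simp: fps_mult_nth intro!: sum.cong)

lemma fps_cutoff_sum_cong: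
  fixes f g :: "'i \<Rightarrow> 'a::comm_monoid_add fps"
  assumes "\<And>i. i \<in> A \<Longrightarrow> fps_cutoff n (f i) = fps_cutoff n (g i)"
  shows "fps_cutoff n (sum f A) = fps_cutoff n (sum g A)"
  using assms unfolding fps_cutoff_eq_fps_cutoff_iff by (simp add: fps_sum_nth)

lemma fps_cutoff_mono:
  "fps_cutoff n f = fps_cutoff n g \<Longrightarrow> m \<le> n \<Longrightarrow> fps_cutoff m f = fps_cutoff m g"
  unfolding fps_cutoff_eq_fps_cutoff_iff by simp

lemma fps_cutoff_X_power_mult:
  fixes f g :: "'a::comm_semiring_1 fps"
  assumes "fps_cutoff n f = fps_cutoff n g" and "m \<le> n + k"
  shows "fps_cutoff m (fps_X ^ k * f) = fps_cutoff m (fps_X ^ k * g)"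
  using assms unfolding fps_cutoff_eq_fps_cutoff_iff by (auto simp: fps_X_power_mult_nth)

lemma fps_cutoff_mult_one_minus_X_power:
  fixes f :: "'a::comm_ring_1 fps"
  assumes "n \<le> k"
  shows "fps_cutoff n (f * (1 - fps_X ^ k)) = fps_cutoff n f"
  using assms unfolding fps_cutoff_eq_fps_cutoff_iff
  by (auto simp: algebra_simps fps_X_power_mult_right_nth)

lemma fps_cutoff_mult_cancel:
  fixes f g u :: "'a::field fps"
  assumes "fps_cutoff n (f * u) = fps_cutoff n (g * u)" and "u $ 0 \<noteq> 0"
  shows "fps_cutoff n f = fps_cutoff n g"
proof -
  have "fps_cutoff n (f * u * inverse u) = fps_cutoff n (g * u * inverse u)"
    using assms(1) by (rule fps_cutoff_mult_cong) simp
  then show ?thesis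
    using assms(2) by (simp add: mult.assoc inverse_mult_eq_1')
qed

lemma fps_cutoff_inverse_cong:
  fixes f g :: "'a::field fps"
  assumes "fps_cutoff n f = fps_cutoff n g" and "f $ 0 \<noteq> 0" and "g $ 0 \<noteq> 0"
  shows "fps_cutoff n (inverse f) = fps_cutoff n (inverse g)"
proof (rule fps_cutoff_mult_cancel)
  show "fps_cutoff n (inverse f * g) = fps_cutoff n (inverse g * g)"
    using fps_cutoff_mult_cong[OF refl assms(1), of "inverse f"] assms(2,3)
    by (simp add: inverse_mult_eq_1)
qed (use assms(3) in simp)

section \<open>q-Pochhammer symbols and Gaussian binomials\<close>

definition qpoch :: "nat \<Rightarrow> 'a::comm_ring_1 fps" where
  "qpoch m = (\<Prod>i\<in>{1..m}. 1 - fps_X ^ i)"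

lemma qpoch_0 [simp]: "qpoch 0 = 1"
  by (simp add: qpoch_def)

lemma qpoch_Suc: "qpoch (Suc m) = qpoch m * (1 - fps_X ^ Suc m)"
  by (simp add: qpoch_def prod.nat_ivl_Suc' mult.commute)

lemma qpoch_nth_0 [simp]: "qpoch m $ 0 = 1"
  by (induction m) (simp_all add: qpoch_Suc)

lemma qpoch_nonzero: "(qpoch m :: 'a::comm_ring_1 fps) \<noteq> 0"
  using qpoch_nth_0[of m] by (metis fps_zero_nth zero_neq_one)

lemma fps_cutoff_qpoch:
  "a \<le> b \<Longrightarrow> fps_cutoff (Suc a) (qpoch b :: 'a::comm_ring_1 fps) = fps_cutoff (Suc a) (qpoch a)"
proof (induction b)
  case (Suc b)
  show ?case
  proof (cases "a = Suc b")
    case False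
    then have "fps_cutoff (Suc a) (qpoch b :: 'a fps) = fps_cutoff (Suc a) (qpoch a)"
      using Suc by simp
    then show ?thesis
      using fps_cutoff_mult_one_minus_X_power[of "Suc a" "Suc b" "qpoch b :: 'a fps"] False Suc.prems
      by (simp add: qpoch_Suc del: power_Suc)
  qed simp
qed simp

fun qbinom :: "nat \<Rightarrow> nat \<Rightarrow> 'a::comm_ring_1 fps" where
  "qbinom m 0 = 1"
| "qbinom 0 (Suc j) = 0"
| "qbinom (Suc m) (Suc j) = qbinom m j + fps_X ^ Suc j * qbinom m (Suc j)"

lemma qbinom_eq_0: "m < j \<Longrightarrow> qbinom m j = 0"
  by (induction m j rule: qbinom.induct) auto

lemma qbinom_diag [simp]: "qbinom m m = 1"
  by (induction m) (simp_all add: qbinom_eq_0)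

lemma qbinom_mult_qpoch:
  "j \<le> m \<Longrightarrow> qbinom m j * qpoch j * qpoch (m - j) = (qpoch m :: 'a::comm_ring_1 fps)"
proof (induction m arbitrary: j)
  case (Suc m)
  show ?case
  proof (cases j)
    case (Suc i)
    show ?thesis
    proof (cases "i = m")
      case False
      with Suc Suc.prems have "Suc i \<le> m" by simp
      then have IH: "qbinom m i * qpoch i * qpoch (m - i) = (qpoch m :: 'a fps)"
        "qbinom m (Suc i) * qpoch (Suc i) * qpoch (m - Suc i) = (qpoch m :: 'a fps)"
        and mi: "m - i = Suc (m - Suc i)"
        using Suc.IH[of i] Suc.IH[of "Suc i"] by simp_all
      have "(qbinom (Suc m) j :: 'a fps) * qpoch j * qpoch (Suc m - j)
          = qbinom m i * qpoch i * qpoch (m - i) * (1 - fps_X ^ Suc i)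
            + fps_X ^ Suc i * (qbinom m (Suc i) * qpoch (Suc i) * qpoch (m - Suc i))
              * (1 - fps_X ^ (m - i))"
        using Suc mi by (simp add: qpoch_Suc algebra_simps)
      also have "\<dots> = qpoch m * (1 - fps_X ^ Suc m)"
        using \<open>Suc i \<le> m\<close> unfolding IH by (simp add: algebra_simps flip: power_add)
      finally show ?thesis by (simp add: qpoch_Suc)
    qed (simp add: Suc qbinom_eq_0 qpoch_Suc)
  qed simp
qed simp

lemma qbinom_Suc_Suc':
  "qbinom (Suc m) (Suc j) = fps_X ^ (m - j) * qbinom m j + (qbinom m (Suc j) :: 'a::idom fps)"
proof -
  consider "Suc j \<le> m" | "j = m" | "m < j" by linarith
  then show ?thesis
  proof cases
    case 1
    have prod: "qbinom m j * qpoch j * qpoch (m - j) = (qpoch m :: 'a fps)"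
      "qbinom m (Suc j) * qpoch (Suc j) * qpoch (m - Suc j) = (qpoch m :: 'a fps)"
      "qbinom (Suc m) (Suc j) * qpoch (Suc j) * qpoch (m - j) = (qpoch (Suc m) :: 'a fps)"
      using qbinom_mult_qpoch[of j m] qbinom_mult_qpoch[of "Suc j" m]
        qbinom_mult_qpoch[of "Suc j" "Suc m"] 1 by simp_all
    have mj: "m - j = Suc (m - Suc j)" using 1 by simp
    have "(fps_X ^ (m - j) * qbinom m j + qbinom m (Suc j) :: 'a fps) * (qpoch (Suc j) * qpoch (m - j))
        = fps_X ^ (m - j) * (qbinom m j * qpoch j * qpoch (m - j)) * (1 - fps_X ^ Suc j)
          + (qbinom m (Suc j) * qpoch (Suc j) * qpoch (m - Suc j)) * (1 - fps_X ^ (m - j))"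
      by (simp add: qpoch_Suc mj algebra_simps)
    also have "\<dots> = qpoch m * (1 - fps_X ^ Suc m)"
      using 1 unfolding prod(1,2) by (simp add: algebra_simps flip: power_add)
    also have "\<dots> = qbinom (Suc m) (Suc j) * (qpoch (Suc j) * qpoch (m - j))"
      using prod by (simp add: qpoch_Suc mult.assoc)
    finally show ?thesis
      using qpoch_nonzero by (metis mult_cancel_right mult_eq_0_iff)
  qed (simp_all add: qbinom_eq_0)
qed

lemma qbinom_symmetric:
  assumes "j \<le> m"
  shows "qbinom m (m - j) = (qbinom m j :: 'a::idom fps)"
proof -
  have "qbinom m j * (qpoch j * qpoch (m - j)) = (qpoch m :: 'a fps)"
    using qbinom_mult_qpoch[of j m] assms by (simp add: mult.assoc)
  moreover have "qbinom m (m - j) * (qpoch j * qpoch (m - j)) = (qpoch m :: 'a fps)"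
    using qbinom_mult_qpoch[of "m - j" m] assms by (simp add: ac_simps)
  ultimately show ?thesis
    using qpoch_nonzero[of j, where 'a='a] qpoch_nonzero[of "m - j", where 'a='a]
    by (metis mult_cancel_right mult_eq_0_iff)
qed

lemma fps_cutoff_qbinom_mult_qpoch:
  assumes "j \<le> m"
  shows "fps_cutoff (Suc (min N (min j (m - j)))) (qbinom m j * qpoch N :: 'a::field fps)
       = fps_cutoff (Suc (min N (min j (m - j)))) 1"
proof -
  define k where "k = min j (m - j)"
  define l where "l = min N k"
  have sym: "qbinom m j = (qbinom m k :: 'a fps)"
    using assms unfolding k_def min_def by (auto simp: qbinom_symmetric)
  have "k \<le> m" by (simp add: k_def)
  then have "qbinom m k * qpoch k * qpoch (m - k) = (1 * qpoch m :: 'a fps)"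
    by (simp add: qbinom_mult_qpoch)
  then have "fps_cutoff (Suc (m - k)) (qbinom m k * qpoch k * qpoch (m - k))
           = fps_cutoff (Suc (m - k)) (1 * qpoch (m - k) :: 'a fps)"
    using fps_cutoff_mult_cong[OF refl fps_cutoff_qpoch[of "m - k" m], of 1] by simp
  then have "fps_cutoff (Suc (m - k)) (qbinom m k * qpoch k) = fps_cutoff (Suc (m - k)) (1 :: 'a fps)"
    by (rule fps_cutoff_mult_cancel) simp
  then have B: "fps_cutoff (Suc l) (qbinom m k * qpoch k) = fps_cutoff (Suc l) (1 :: 'a fps)"
    by (rule fps_cutoff_mono) (simp add: l_def k_def)
  have "fps_cutoff (Suc l) (qpoch N :: 'a fps) = fps_cutoff (Suc l) (qpoch k)"
    using fps_cutoff_qpoch[of l N, where 'a='a] fps_cutoff_qpoch[of l k, where 'a='a]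
    by (simp add: l_def)
  then have "fps_cutoff (Suc l) (qbinom m k * qpoch N :: 'a fps) = fps_cutoff (Suc l) (qbinom m k * qpoch k)"
    by (rule fps_cutoff_mult_cong[OF refl])
  with B sym show ?thesis by (simp add: l_def k_def)
qed

lemma qbinom_two_step_1:
  "qbinom (Suc (Suc m)) 1 = 1 + fps_X ^ Suc m + fps_X * (qbinom m 1 :: 'a::idom fps)"
  using qbinom_Suc_Suc'[of m 0, where 'a='a] by (simp add: algebra_simps)

lemma qbinom_two_step:
  "qbinom (Suc (Suc m)) (Suc (Suc j))
   = fps_X ^ (m - j) * qbinom m j + (1 + fps_X ^ Suc m) * qbinom m (Suc j)
     + fps_X ^ (j + 2) * (qbinom m (Suc (Suc j)) :: 'a::idom fps)"
proof -
  have "qbinom (Suc (Suc m)) (Suc (Suc j))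
      = qbinom (Suc m) (Suc j) + fps_X ^ Suc (Suc j) * (qbinom (Suc m) (Suc (Suc j)) :: 'a fps)"
    by simp
  moreover have "fps_X ^ Suc (Suc j) * (fps_X ^ (m - Suc j) * qbinom m (Suc j))
      = fps_X ^ Suc m * (qbinom m (Suc j) :: 'a fps)"
  proof (cases "Suc j \<le> m")
    case True
    then have "Suc (Suc j) + (m - Suc j) = Suc m" by simp
    then show ?thesis by (metis mult.assoc power_add)
  qed (simp add: qbinom_eq_0)
  ultimately show ?thesis
    unfolding qbinom_Suc_Suc'[of m] qbinom_Suc_Suc'[of m "Suc j"] by (simp add: algebra_simps)
qed

section \<open>The finite Jacobi triple product\<close>

definition tri :: "nat \<Rightarrow> nat" where
  "tri j = j * (j + 1) div 2"

lemma two_mult_tri: "2 * tri j = j * (j + 1)"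
  by (simp add: tri_def)

lemma tri_0 [simp]: "tri 0 = 0"
  by (simp add: tri_def)

lemma tri_Suc: "tri (Suc j) = tri j + Suc j"
  using two_mult_tri[of j] two_mult_tri[of "Suc j"] by simp

lemma strict_mono_tri: "strict_mono tri"
  by (rule strict_mono_Suc_iff[THEN iffD2]) (simp add: tri_Suc)

lemma tri_eq_iff [simp]: "tri a = tri b \<longleftrightarrow> a = b"
  using strict_mono_tri by (rule strict_mono_eq)

lemma le_tri: "j \<le> tri j"
  using two_mult_tri[of j] by (cases j) simp_all

definition triple_exp :: "nat \<Rightarrow> nat \<Rightarrow> nat" where
  "triple_exp n i = tri (if n < i then i - n - 1 else n - i)"

lemma two_mult_triple_exp: "2 * int (triple_exp n i) = (int i - int n) * (int i - int n - 1)"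
proof -
  have tri: "2 * int (tri k) = int k * (int k + 1)" for k
    using arg_cong[OF two_mult_tri[of k], of int] by (simp add: algebra_simps)
  show ?thesis
  proof (cases "n < i")
    case True
    then have "int (i - n - 1) = int i - int n - 1" by simp
    then show ?thesis
      using True tri[of "i - n - 1"] unfolding triple_exp_def by (simp add: algebra_simps)
  next
    case False
    then have "int (n - i) = int n - int i" by simp
    then show ?thesis
      using False tri[of "n - i"] unfolding triple_exp_def by (simp add: algebra_simps)
  qed
qed

definition triple_poly :: "nat \<Rightarrow> 'a::comm_ring_1 fps poly" where
  "triple_poly n = (\<Prod>j\<in>{1..n}. [:1, - (fps_X ^ (j - 1)):] * [:- (fps_X ^ j), 1:])"

lemma triple_poly_Suc:
  "triple_poly (Suc n) = triple_poly n * [:- (fps_X ^ Suc n), 1 + fps_X ^ (2 * n + 1), - (fps_X ^ n):]"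
proof -
  have factor: "[:1, - (fps_X ^ (Suc n - 1)):] * [:- (fps_X ^ Suc n), 1:]
      = [:- (fps_X ^ Suc n), 1 + fps_X ^ (2 * n + 1), - (fps_X ^ n) :: 'a fps:]"
    by (simp add: algebra_simps mult_2_right flip: power_add)
  have "triple_poly (Suc n)
      = ([:1, - (fps_X ^ (Suc n - 1)):] * [:- (fps_X ^ Suc n), 1:]) * (triple_poly n :: 'a fps poly)"
    unfolding triple_poly_def by (rule prod.nat_ivl_Suc') simp
  then show ?thesis unfolding factor by (simp add: mult.commute)
qed

definition triple_coeff :: "nat \<Rightarrow> nat \<Rightarrow> 'a::comm_ring_1 fps" where
  "triple_coeff n i = (-1) ^ (i + n) * fps_X ^ triple_exp n i * qbinom (2 * n) i"

lemma coeff_mult_pCons3_0: "coeff (p * [:a, b, c:]) 0 = a * coeff p 0"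
  by (simp add: mult_pCons_right)

lemma coeff_mult_pCons3_1: "coeff (p * [:a, b, c:]) 1 = a * coeff p 1 + b * coeff p 0"
  by (simp add: mult_pCons_right coeff_pCons)

lemma coeff_mult_pCons3_Suc_Suc:
  "coeff (p * [:a, b, c:]) (Suc (Suc i)) = a * coeff p (i + 2) + b * coeff p (i + 1) + c * coeff p i"
  by (simp add: mult_pCons_right coeff_pCons add.assoc)

lemma triple_coeff_Suc_0:
  "triple_coeff (Suc n) 0 = - (fps_X ^ Suc n) * (triple_coeff n 0 :: 'a::comm_ring_1 fps)"
proof -
  have "triple_exp (Suc n) 0 = n + 1 + triple_exp n 0"
    using two_mult_triple_exp[of "Suc n" 0] two_mult_triple_exp[of n 0] by (simp add: algebra_simps)
  then show ?thesis
    by (simp add: triple_coeff_def power_add)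
qed

lemma triple_coeff_Suc_1:
  "triple_coeff (Suc n) 1
   = - (fps_X ^ Suc n) * triple_coeff n 1 + (1 + fps_X ^ (2 * n + 1)) * (triple_coeff n 0 :: 'a::idom fps)"
proof -
  have e1: "triple_exp (Suc n) 1 + 1 = Suc n + triple_exp n 1"
    and e0: "triple_exp (Suc n) 1 = triple_exp n 0"
    using two_mult_triple_exp[of "Suc n" 1] two_mult_triple_exp[of n 1] two_mult_triple_exp[of n 0]
    by (simp_all add: algebra_simps)
  have q1: "fps_X ^ triple_exp (Suc n) 1 * fps_X = fps_X ^ Suc n * (fps_X ^ triple_exp n 1 :: 'a fps)"
    by (metis e1 power_add power_one_right)
  have "triple_coeff (Suc n) 1 = (-1) ^ n * (fps_X ^ triple_exp n 0 * (1 + fps_X ^ Suc (2 * n))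
          + (fps_X ^ triple_exp (Suc n) 1 * fps_X) * (qbinom (2 * n) 1 :: 'a fps))"
    unfolding triple_coeff_def mult_2 add_Suc_right add_Suc qbinom_two_step_1 e0
    by (simp add: algebra_simps)
  then show ?thesis
    unfolding q1 by (simp add: triple_coeff_def algebra_simps)
qed

lemma triple_coeff_Suc_Suc_Suc:
  "triple_coeff (Suc n) (Suc (Suc j))
   = - (fps_X ^ Suc n) * triple_coeff n (Suc (Suc j)) + (1 + fps_X ^ (2 * n + 1)) * triple_coeff n (Suc j)
     - fps_X ^ n * (triple_coeff n j :: 'a::idom fps)"
proof -
  define E where "E = triple_exp (Suc n) (Suc (Suc j))"
  have eb: "E = triple_exp n (Suc j)"
    and ec: "E + (j + 2) = Suc n + triple_exp n (Suc (Suc j))"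
    using two_mult_triple_exp[of "Suc n" "Suc (Suc j)"] two_mult_triple_exp[of n "Suc j"]
      two_mult_triple_exp[of n "Suc (Suc j)"]
    unfolding E_def by (simp_all add: algebra_simps)
  have fa: "fps_X ^ E * fps_X ^ (2 * n - j) * qbinom (2 * n) j
      = fps_X ^ n * fps_X ^ triple_exp n j * (qbinom (2 * n) j :: 'a fps)"
  proof (cases "j \<le> 2 * n")
    case True
    then have "E + (2 * n - j) = n + triple_exp n j"
      using two_mult_triple_exp[of "Suc n" "Suc (Suc j)"] two_mult_triple_exp[of n j]
      unfolding E_def by (simp add: algebra_simps of_nat_diff)
    then show ?thesis by (metis power_add)
  qed (simp add: qbinom_eq_0)
  have fc: "fps_X ^ E * fps_X ^ (j + 2) = fps_X ^ Suc n * (fps_X ^ triple_exp n (Suc (Suc j)) :: 'a fps)"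
    by (metis ec power_add)
  have "triple_coeff (Suc n) (Suc (Suc j))
      = - ((-1) ^ (j + n)) * ((fps_X ^ E * fps_X ^ (2 * n - j) * qbinom (2 * n) j)
        + (1 + fps_X ^ Suc (2 * n)) * (fps_X ^ E * qbinom (2 * n) (Suc j))
        + (fps_X ^ E * fps_X ^ (j + 2)) * (qbinom (2 * n) (Suc (Suc j)) :: 'a fps))"
    unfolding triple_coeff_def mult_2 add_Suc_right add_Suc qbinom_two_step E_def[symmetric]
    by (simp add: algebra_simps)
  then show ?thesis
    unfolding fa fc unfolding eb by (simp add: triple_coeff_def algebra_simps)
qed

lemma coeff_triple_poly: "coeff (triple_poly n) i = (triple_coeff n i :: 'a::idom fps)"
proof (induction n arbitrary: i)
  case 0
  then show ?case
    by (cases i) (simp_all add: triple_poly_def triple_coeff_def triple_exp_def)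
next
  case (Suc n)
  consider "i = 0" | "i = 1" | j where "i = Suc (Suc j)"
    by (metis One_nat_def not0_implies_Suc)
  then show ?case
    by cases (simp_all add: triple_poly_Suc coeff_mult_pCons3_0 coeff_mult_pCons3_1
        coeff_mult_pCons3_Suc_Suc Suc.IH triple_coeff_Suc_0 triple_coeff_Suc_1[unfolded One_nat_def]
        triple_coeff_Suc_Suc_Suc)
qed

section \<open>Jacobi's identity modulo a power of q\<close>

lemma degree_triple_poly: "degree (triple_poly n :: 'a::idom fps poly) \<le> 2 * n"
  by (rule degree_le) (simp add: coeff_triple_poly triple_coeff_def qbinom_eq_0)

lemma poly_pderiv_one:
  fixes p :: "'a::{comm_semiring_1,semiring_no_zero_divisors} poly"
  assumes "degree p \<le> M"
  shows "poly (pderiv p) 1 = (\<Sum>i\<le>M. of_nat i * coeff p i)"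
proof -
  have "poly (pderiv p) 1 = (\<Sum>i<M. coeff (pderiv p) i)"
  proof (cases "M = 0")
    case True
    with assms show ?thesis by (auto elim!: degree_eq_zeroE simp: pderiv_pCons)
  next
    case False
    have "degree (pderiv p) \<le> M - 1"
      using assms by (intro degree_le) (simp add: coeff_pderiv coeff_eq_0)
    with False have "degree (pderiv p) < M" by simp
    then show ?thesis
      unfolding poly_altdef power_one mult_1_right
      by (intro sum.mono_neutral_left) (auto simp: coeff_eq_0)
  qed
  also have "\<dots> = (\<Sum>i<M. of_nat (Suc i) * coeff p (Suc i))"
    by (simp add: coeff_pderiv)
  also have "\<dots> = (\<Sum>i\<le>M. of_nat i * coeff p i)"
    by (subst lessThan_Suc_atMost[symmetric], subst sum.lessThan_Suc_shift) simp
  finally show ?thesis .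
qed

lemma poly_triple_poly_one: "poly (triple_poly (Suc n)) 1 = (0 :: 'a::comm_ring_1 fps)"
  unfolding triple_poly_def poly_prod
  by (intro prod_zero) (auto intro!: bexI[of _ 1])

lemma poly_pderiv_triple_poly_one:
  "poly (pderiv (triple_poly (Suc n))) 1 = - (qpoch n * qpoch (Suc n) :: 'a::idom fps)"
proof (induction n)
  case 0
  have "triple_poly 1 = [:- fps_X, 1 + fps_X, -1 :: 'a fps:]"
    using triple_poly_Suc[of 0] by (simp add: triple_poly_def)
  then show ?case by (simp add: qpoch_Suc pderiv_pCons)
next
  case (Suc n)
  have "poly [:- (fps_X ^ Suc (Suc n)), 1 + fps_X ^ (2 * Suc n + 1), - (fps_X ^ Suc n):] 1
      = (1 - fps_X ^ Suc n) * (1 - fps_X ^ Suc (Suc n) :: 'a fps)"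
    by (simp add: algebra_simps flip: power_add)
  then have "poly (pderiv (triple_poly (Suc (Suc n)))) 1
      = - (qpoch n * qpoch (Suc n)) * ((1 - fps_X ^ Suc n) * (1 - fps_X ^ Suc (Suc n)) :: 'a fps)"
    unfolding triple_poly_Suc[of "Suc n"] pderiv_mult poly_mult poly_add Suc.IH
      poly_triple_poly_one by simp
  also have "\<dots> = - (qpoch (Suc n) * qpoch (Suc (Suc n)))"
    by (simp add: qpoch_Suc algebra_simps)
  finally show ?case .
qed

definition jacobi_sum :: "nat \<Rightarrow> 'a::comm_ring_1 fps" where
  "jacobi_sum n = (\<Sum>j<n. (-1) ^ j * of_nat (2 * j + 1) * fps_X ^ tri j)"

lemma sum_atMost_double:
  fixes f :: "nat \<Rightarrow> 'a::comm_monoid_add"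
  shows "(\<Sum>i\<le>2 * n. f i) = f 0 + (\<Sum>j<n. f (n - j) + f (Suc n + j))"
proof -
  define A where "A = (\<lambda>j. n - j) ` {..<n}"
  define B where "B = (\<lambda>j. Suc n + j) ` {..<n}"
  have "{..2 * n} = insert 0 (A \<union> B)"
  proof (intro equalityI subsetI)
    fix i assume "i \<in> {..2 * n}"
    then consider "i = 0" | "0 < i" "i \<le> n" | "n < i" "i \<le> 2 * n" by fastforce
    then show "i \<in> insert 0 (A \<union> B)"
    proof cases
      case 2
      then have "i \<in> A" unfolding A_def by (intro rev_image_eqI[of "n - i"]) auto
      then show ?thesis by blast
    next
      case 3
      then have "i \<in> B" unfolding B_def by (intro rev_image_eqI[of "i - Suc n"]) auto
      then show ?thesis by blast
    qed simp
  qed (auto simp: A_def B_def)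
  moreover have "0 \<notin> A \<union> B" and "A \<inter> B = {}" and "finite A" and "finite B"
    by (auto simp: A_def B_def)
  ultimately have "(\<Sum>i\<le>2 * n. f i) = f 0 + (sum f A + sum f B)"
    by (simp add: sum.union_disjoint)
  moreover have "sum f A = (\<Sum>j<n. f (n - j))" and "sum f B = (\<Sum>j<n. f (Suc n + j))"
    unfolding A_def B_def by (auto intro!: sum.reindex[unfolded comp_def] simp: inj_on_def)
  ultimately show ?thesis
    by (simp add: sum.distrib)
qed

lemma sum_weighted_triple_signs:
  "(\<Sum>i\<le>2 * n. of_nat i * ((-1) ^ (i + n) * fps_X ^ triple_exp n i))
   = - (jacobi_sum n :: 'a::comm_ring_1 fps)"
proof -
  have "of_nat (n - j) * ((-1) ^ (n - j + n) * fps_X ^ triple_exp n (n - j))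
      + of_nat (Suc n + j) * ((-1) ^ (Suc n + j + n) * fps_X ^ triple_exp n (Suc n + j))
      = - ((-1) ^ j * of_nat (2 * j + 1) * fps_X ^ tri j :: 'a fps)" if "j < n" for j
  proof -
    have e1: "n - j + n = j + 2 * (n - j)" and e2: "Suc n + j + n = Suc j + 2 * n"
      using that by simp_all
    have sign: "(-1 :: 'a fps) ^ (n - j + n) = (-1) ^ j" "(-1 :: 'a fps) ^ (Suc n + j + n) = - ((-1) ^ j)"
      unfolding e1 e2 by (simp_all add: power_add power_mult)
    have exp: "triple_exp n (n - j) = tri j" "triple_exp n (Suc n + j) = tri j"
      using that by (simp_all add: triple_exp_def)
    have diff: "(of_nat (n - j) :: 'a fps) = of_nat n - of_nat j"
      using that by (simp add: of_nat_diff)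
    show ?thesis
      unfolding sign exp diff by (simp add: algebra_simps)
  qed
  then show ?thesis
    by (simp add: sum_atMost_double jacobi_sum_def sum_negf)
qed

lemma triple_exp_bound:
  assumes "i \<le> 2 * Suc N"
  shows "Suc N \<le> Suc (min N (min i (2 * Suc N - i))) + triple_exp (Suc N) i"
proof (cases "Suc N < i")
  case True
  then show ?thesis
    using assms le_tri[of "i - Suc N - 1"] by (simp add: triple_exp_def)
next
  case False
  then show ?thesis
    using le_tri[of "Suc N - i"] by (simp add: triple_exp_def)
qed

lemma fps_cutoff_triple_term:
  assumes "i \<le> 2 * Suc N"
  shows "fps_cutoff (Suc N) (fps_X ^ triple_exp (Suc N) i * (qbinom (2 * Suc N) i * qpoch N))
       = fps_cutoff (Suc N) (fps_X ^ triple_exp (Suc N) i :: 'a::field fps)"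
proof -
  have "fps_cutoff (Suc (min N (min i (2 * Suc N - i)))) (qbinom (2 * Suc N) i * qpoch N)
      = fps_cutoff (Suc (min N (min i (2 * Suc N - i)))) (1 :: 'a fps)"
    using assms by (intro fps_cutoff_qbinom_mult_qpoch) simp
  from fps_cutoff_X_power_mult[OF this triple_exp_bound[OF assms]] show ?thesis
    by simp
qed

lemma fps_cutoff_qpoch_cube:
  "fps_cutoff (Suc N) (qpoch N ^ 3) = fps_cutoff (Suc N) (jacobi_sum (Suc N) :: 'a::field fps)"
proof -
  define n where "n = Suc N"
  have "- (qpoch N * qpoch n) = poly (pderiv (triple_poly n)) (1 :: 'a fps)"
    by (simp add: n_def poly_pderiv_triple_poly_one)
  also have "\<dots> = (\<Sum>i\<le>2 * n. of_nat i * triple_coeff n i)"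
    by (simp add: poly_pderiv_one[OF degree_triple_poly] coeff_triple_poly)
  finally have pderiv: "- (qpoch N * qpoch n) = (\<Sum>i\<le>2 * n. of_nat i * triple_coeff n i :: 'a fps)" .
  have "- (qpoch N * qpoch n) * qpoch N
      = (\<Sum>i\<le>2 * n. of_nat i * ((-1) ^ (i + n)
          * (fps_X ^ triple_exp n i * (qbinom (2 * n) i * qpoch N))) :: 'a fps)"
    unfolding pderiv by (simp add: sum_distrib_left sum_distrib_right triple_coeff_def mult_ac)
  moreover have "fps_cutoff n (\<Sum>i\<le>2 * n. of_nat i * ((-1) ^ (i + n)
          * (fps_X ^ triple_exp n i * (qbinom (2 * n) i * qpoch N))))
      = fps_cutoff n (\<Sum>i\<le>2 * n. of_nat i * ((-1) ^ (i + n) * fps_X ^ triple_exp n i) :: 'a fps)"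
    unfolding n_def
    by (intro fps_cutoff_sum_cong fps_cutoff_mult_cong[OF refl] fps_cutoff_triple_term) simp
  ultimately have "fps_cutoff n (- (qpoch N * qpoch n * qpoch N)) = fps_cutoff n (- jacobi_sum n :: 'a fps)"
    by (simp add: sum_weighted_triple_signs)
  then have "fps_cutoff n (qpoch N * qpoch n * qpoch N) = fps_cutoff n (jacobi_sum n :: 'a fps)"
    by (simp add: fps_cutoff_uminus)
  moreover have "fps_cutoff n (qpoch N * qpoch n * qpoch N) = fps_cutoff n (qpoch N ^ 3 :: 'a fps)"
    using fps_cutoff_mult_one_minus_X_power[of n n "qpoch N ^ 3 :: 'a fps"]
    by (simp add: n_def qpoch_Suc power3_eq_cube algebra_simps)
  ultimately show ?thesis
    by (simp add: n_def)
qed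

section \<open>Inverting a power series by compositions\<close>

lemma compositions_0 [simp]: "compositions A 0 = {[]}"
  unfolding compositions_def
  by (auto simp: sum_list_eq_0_iff) (metis list.set_intros(1) neq_Nil_conv less_irrefl)

lemma finite_compositions: "finite (compositions A n)"
proof (rule finite_subset)
  have "length c \<le> sum_list c" if "\<forall>x\<in>set c. 0 < x" for c :: "nat list"
    using that by (induction c) auto
  then show "compositions A n \<subseteq> {c. set c \<subseteq> {..n} \<and> length c \<le> n}"
    unfolding compositions_def using member_le_sum_list by fastforce
qed (rule finite_lists_length_le, simp)

lemma compositions_Cons:
  assumes "0 < n"
  shows "compositions A n = (\<lambda>(t, c). t # c) ` (SIGMA t:{t\<in>{1..n}. t \<in> A}. compositions A (n - t))"
proof (intro equalityI subsetI)
  fix c assume c: "c \<in> compositions A n"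
  with assms obtain t c' where "c = t # c'"
    unfolding compositions_def by (cases c) auto
  with c show "c \<in> (\<lambda>(t, c). t # c) ` (SIGMA t:{t\<in>{1..n}. t \<in> A}. compositions A (n - t))"
    unfolding compositions_def by (auto intro!: image_eqI[of _ _ "(t, c')"])
qed (auto simp: compositions_def)

lemma sum_compositions_Cons:
  fixes w :: "nat \<Rightarrow> 'a::comm_semiring_1"
  assumes "0 < n"
  shows "(\<Sum>c\<in>compositions A n. \<Prod>x\<leftarrow>c. w x)
       = (\<Sum>t\<in>{t\<in>{1..n}. t \<in> A}. w t * (\<Sum>c\<in>compositions A (n - t). \<Prod>x\<leftarrow>c. w x))"
proof -
  define T where "T = {t\<in>{1..n}. t \<in> A}"
  have "inj_on (\<lambda>(t, c). t # c) (SIGMA t:T. compositions A (n - t))"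
    by (rule inj_onI) auto
  then have "(\<Sum>c\<in>compositions A n. \<Prod>x\<leftarrow>c. w x)
      = (\<Sum>(t, c)\<in>(SIGMA t:T. compositions A (n - t)). \<Prod>x\<leftarrow>t # c. w x)"
    unfolding compositions_Cons[OF assms] T_def[symmetric]
    by (subst sum.reindex) (simp_all add: case_prod_beta)
  also have "\<dots> = (\<Sum>t\<in>T. \<Sum>c\<in>compositions A (n - t). w t * (\<Prod>x\<leftarrow>c. w x))"
    by (subst sum.Sigma) (auto simp: T_def finite_compositions)
  finally show ?thesis
    by (simp add: T_def sum_distrib_left)
qed

lemma inverse_fps_nth_rec:
  fixes f :: "'a::field fps"
  assumes "f $ 0 = 1" and "0 < n"
  shows "inverse f $ n = (\<Sum>t=1..n. - f $ t * inverse f $ (n - t))"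
proof -
  have "(f * inverse f) $ n = 0"
    using assms by (simp add: inverse_mult_eq_1')
  then have "inverse f $ n + (\<Sum>t=1..n. f $ t * inverse f $ (n - t)) = 0"
    using assms(1) by (simp add: fps_mult_nth sum.atLeast_Suc_atMost)
  then show ?thesis
    by (simp add: eq_neg_iff_add_eq_0 sum_negf)
qed

lemma inverse_fps_nth_compositions:
  fixes f :: "'a::field fps"
  assumes "f $ 0 = 1" and "\<And>x. 0 < x \<Longrightarrow> x \<notin> A \<Longrightarrow> f $ x = 0"
  shows "inverse f $ n = (\<Sum>c\<in>compositions A n. \<Prod>x\<leftarrow>c. - f $ x)"
proof (induction n rule: less_induct)
  case (less n)
  show ?case
  proof (cases "n = 0")
    case False
    then have "inverse f $ n = (\<Sum>t=1..n. - f $ t * (\<Sum>c\<in>compositions A (n - t). \<Prod>x\<leftarrow>c. - f $ x))"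
      using assms(1) less by (simp add: inverse_fps_nth_rec)
    also have "\<dots> = (\<Sum>t\<in>{t\<in>{1..n}. t \<in> A}. - f $ t * (\<Sum>c\<in>compositions A (n - t). \<Prod>x\<leftarrow>c. - f $ x))"
      using assms(2) by (intro sum.mono_neutral_right) auto
    also have "\<dots> = (\<Sum>c\<in>compositions A n. \<Prod>x\<leftarrow>c. - f $ x)"
      using False by (simp add: sum_compositions_Cons)
    finally show ?thesis .
  qed (simp add: assms(1))
qed

section \<open>Three-coloured partitions\<close>

lemma jacobi_sum_nth:
  "jacobi_sum n $ k = (\<Sum>j<n. if k = tri j then (-1) ^ j * of_nat (2 * j + 1) else 0 :: 'a::comm_ring_1)"
proof -
  have "(-1 :: 'a fps) ^ j = fps_const ((-1) ^ j)" for j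
    by (induction j) simp_all
  then have "((-1) ^ j * of_nat (2 * j + 1) :: 'a fps) = fps_const ((-1) ^ j * of_nat (2 * j + 1))" for j
    by (simp only: fps_const_mult flip: fps_of_nat)
  then show ?thesis
    unfolding jacobi_sum_def fps_sum_nth by (intro sum.cong) (auto simp: fps_mult_left_const_nth)
qed

lemma jacobi_sum_nth_tri: "j < n \<Longrightarrow> jacobi_sum n $ tri j = ((-1) ^ j * of_nat (2 * j + 1) :: 'a::comm_ring_1)"
  by (simp add: jacobi_sum_nth if_distrib sum.delta cong: if_cong)

lemma jacobi_sum_nth_not_tri: "k \<notin> range tri \<Longrightarrow> jacobi_sum n $ k = (0 :: 'a::comm_ring_1)"
  by (auto simp: jacobi_sum_nth intro!: sum.neutral)

lemma P3_eq_range_tri: "P3 = range tri"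
  by (auto simp: P3_def tri_def)

lemma p3_eq_sum_compositions: "p3 n = (\<Sum>c\<in>compositions P3 n. \<Prod>x\<leftarrow>c. - jacobi_sum (Suc n) $ x)"
proof -
  have J0: "jacobi_sum (Suc n) $ 0 = (1 :: rat)"
    using jacobi_sum_nth_tri[of 0 "Suc n"] by simp
  have "p3 n = inverse (qpoch n ^ 3) $ n"
    by (simp add: p3_def qpoch_def fps_inverse_power)
  also have "\<dots> = inverse (jacobi_sum (Suc n)) $ n"
    using fps_cutoff_inverse_cong[OF fps_cutoff_qpoch_cube[of n, where 'a=rat]] J0
    unfolding fps_cutoff_eq_fps_cutoff_iff by (simp add: fps_nth_power_0)
  also have "\<dots> = (\<Sum>c\<in>compositions P3 n. \<Prod>x\<leftarrow>c. - jacobi_sum (Suc n) $ x)"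
    using J0 by (intro inverse_fps_nth_compositions) (auto simp: P3_eq_range_tri jacobi_sum_nth_not_tri)
  finally show ?thesis .
qed

lemma prod_list_map_eq_prod_count:
  fixes h :: "'b \<Rightarrow> 'a::comm_monoid_mult"
  assumes "finite S" and "inj_on g S" and "set c \<subseteq> g ` S"
  shows "(\<Prod>x\<leftarrow>c. h x) = (\<Prod>j\<in>S. h (g j) ^ count_list c (g j))"
  using assms(3)
proof (induction c)
  case (Cons x c)
  then obtain i where i: "i \<in> S" "x = g i" by auto
  have "(\<Prod>j\<in>S. h (g j) ^ count_list (x # c) (g j))
      = (\<Prod>j\<in>S. (if j = i then h (g j) else 1) * h (g j) ^ count_list c (g j))"
    using assms(2) i by (intro prod.cong) (auto simp: inj_on_eq_iff)
  also have "\<dots> = h x * (\<Prod>j\<in>S. h (g j) ^ count_list c (g j))"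
    using assms(1) i by (simp add: prod.distrib prod.delta)
  finally show ?case
    using Cons by simp
qed simp

lemma power_length_filter: "a ^ length (filter P xs) = (\<Prod>x\<leftarrow>xs. if P x then a else 1)"
  by (induction xs) auto

lemma tri_mem_iff_even: "tri j \<in> {m * (2 * m + 1) | m. True} \<longleftrightarrow> even j"
proof -
  have "m * (2 * m + 1) = tri (2 * m)" for m
    by (simp add: tri_def)
  then have "tri j \<in> {m * (2 * m + 1) | m. True} \<longleftrightarrow> (\<exists>m. j = 2 * m)"
    by simp
  then show ?thesis
    by auto
qed

lemma set_compositions_P3: "c \<in> compositions P3 n \<Longrightarrow> set c \<subseteq> tri ` {1..n}"
proof
  fix x assume "c \<in> compositions P3 n" and "x \<in> set c"
  then have "x \<in> P3" "0 < x" "x \<le> n"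
    unfolding compositions_def using member_le_sum_list by auto
  then obtain j where "x = tri j" "0 < tri j" "tri j \<le> n"
    by (auto simp: P3_eq_range_tri)
  moreover have "j \<le> n" and "j \<noteq> 0"
    using le_tri[of j] calculation by (auto intro: gr0I)
  ultimately show "x \<in> tri ` {1..n}"
    by auto
qed

lemma prod_compositions_jacobi_sum:
  assumes "c \<in> compositions P3 n"
  shows "(\<Prod>x\<leftarrow>c. - jacobi_sum (Suc n) $ x)
       = (of_int (\<Prod>j\<in>{1..n}. ((-1) ^ (j + 1) * (2 * int j + 1)) ^ mult (j * (j + 1) div 2) c) :: 'a::comm_ring_1)"
proof -
  have "(\<Prod>x\<leftarrow>c. - jacobi_sum (Suc n) $ x)
      = (\<Prod>j\<in>{1..n}. (- jacobi_sum (Suc n) $ tri j) ^ count_list c (tri j) :: 'a)"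
    by (rule prod_list_map_eq_prod_count[OF finite_atLeastAtMost
          strict_mono_imp_inj_on[OF strict_mono_tri] set_compositions_P3[OF assms]])
  also have "\<dots> = (\<Prod>j\<in>{1..n}. of_int ((-1) ^ (j + 1) * (2 * int j + 1)) ^ count_list c (tri j))"
    by (intro prod.cong) (simp_all add: jacobi_sum_nth_tri add.commute)
  finally show ?thesis
    by (simp add: mult_def tri_def)
qed

lemma power_ellplus_compositions:
  assumes "c \<in> compositions P3 n"
  shows "(-1) ^ ellplus c = (\<Prod>j\<in>{1..n}. ((-1) ^ (j + 1)) ^ mult (j * (j + 1) div 2) c :: int)"
proof -
  have "(-1 :: int) ^ ellplus c = (\<Prod>x\<leftarrow>c. if x \<in> {m * (2 * m + 1) | m. True} then -1 else 1)"
    unfolding ellplus_def by (rule power_length_filter)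
  also have "\<dots> = (\<Prod>j\<in>{1..n}. (if tri j \<in> {m * (2 * m + 1) | m. True} then -1 else 1) ^ count_list c (tri j))"
    by (rule prod_list_map_eq_prod_count[OF finite_atLeastAtMost
          strict_mono_imp_inj_on[OF strict_mono_tri] set_compositions_P3[OF assms]])
  also have "\<dots> = (\<Prod>j\<in>{1..n}. ((-1) ^ (j + 1)) ^ count_list c (tri j))"
    unfolding tri_mem_iff_even by (intro prod.cong) simp_all
  finally show ?thesis
    by (simp only: mult_def tri_def)
qed

theorem mainTheorem13:
  fixes n :: nat
  shows "p3 n = of_int (\<Sum>c\<in>compositions P3 n.
            \<Prod>j\<in>{1..n}. ((-1) ^ (j + 1) * (2 * int j + 1)) ^ mult (j * (j + 1) div 2) c)
       \<and> (\<Sum>c\<in>compositions P3 n.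
            \<Prod>j\<in>{1..n}. ((-1) ^ (j + 1) * (2 * int j + 1)) ^ mult (j * (j + 1) div 2) c)
         = (\<Sum>c\<in>compositions P3 n.
            (-1) ^ ellplus c * (\<Prod>j\<in>{1..n}. (2 * int j + 1) ^ mult (j * (j + 1) div 2) c))"
proof
  show "p3 n = of_int (\<Sum>c\<in>compositions P3 n.
            \<Prod>j\<in>{1..n}. ((-1) ^ (j + 1) * (2 * int j + 1)) ^ mult (j * (j + 1) div 2) c)"
    unfolding p3_eq_sum_compositions of_int_sum by (intro sum.cong refl prod_compositions_jacobi_sum)
  show "(\<Sum>c\<in>compositions P3 n.
            \<Prod>j\<in>{1..n}. ((-1) ^ (j + 1) * (2 * int j + 1)) ^ mult (j * (j + 1) div 2) c)
         = (\<Sum>c\<in>compositions P3 n.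
            (-1) ^ ellplus c * (\<Prod>j\<in>{1..n}. (2 * int j + 1) ^ mult (j * (j + 1) div 2) c))"
    by (intro sum.cong refl) (simp only: power_ellplus_compositions power_mult_distrib prod.distrib)
qed

end
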